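(* Let $\nabla$ and $\tilde\nabla$ be Type $\mathcal A$ connections on $\mathbb R^2$ whose Ricci tensors $\rho$ and $\tilde\rho$ are non-degenerate. Then $\nabla$ is linearly equivalent to $\tilde\nabla$ if and only if $\nabla$ is (locally) affinely equivalent to $\tilde\nabla$.
   Context: A torsion-free connection has Christoffel symbols $\nabla_{\partial_{x^i}}\partial_{x^j}=\Gamma_{ij}^k\partial_{x^k}$; curvature $R(X,Y)Z=\nabla_X\nabla_YZ-\nabla_Y\nabla_XZ-\nabla_{[X,Y]}Z$, Ricci tensor $\rho(Y,Z)=\mathrm{Tr}(X\mapsto R(X,Y)Z)$. For real constants, $\Gamma(a,b,c,d,e,f)$ denotes the connection on $\mathbb R^2$ with constant Christoffel symbols $\Gamma_{11}^1=a$, $\Gamma_{11}^2=b$, $\Gamma_{12}^1=\Gamma_{21}^1=c$, $\Gamma_{12}^2=\Gamma_{21}^2=d$, $\Gamma_{22}^1=e$, $\Gamma_{22}^2=f$; these are the Type $\mathcal A$ connections. Two Type $\mathcal A$ connections are linearly equivalent if there is $T\in GL(2,\mathbb R)$ with $T^*\tilde\nabla=\nabla$. They are (locally) affinely equivalent if there exist open sets $U,V\subset\mathbb R^2$ and a diffeomorphism $T:U\to V$ with $T^*\tilde\nabla=\nabla$ on $U$. *)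

theory Defs
  imports "HOL-Analysis.Analysis"
begin

text \<open>Points of R^2 are vectors of type real^2; coordinate indices are the elements 1, 2 of
  the numeral type 2.  A connection with constant Christoffel symbols is given by
  G :: 2 => 2 => real^2, where G i j is the vector nabla_{d_i} d_j, i.e. (G i j) $ k = Gamma_ij^k.\<close>

definition typeA :: "real \<Rightarrow> real \<Rightarrow> real \<Rightarrow> real \<Rightarrow> real \<Rightarrow> real \<Rightarrow> 2 \<Rightarrow> 2 \<Rightarrow> real^2" where
  "typeA a b c d e f i j =
     (if i = 1 \<and> j = 1 then vector [a, b]
      else if i = 2 \<and> j = 2 then vector [e, f]
      else vector [c, d])"

text \<open>nabla_X Y for constant vector fields X = u, Y = v (bilinear extension).\<close>
definition conn_apply :: "(2 \<Rightarrow> 2 \<Rightarrow> real^2) \<Rightarrow> real^2 \<Rightarrow> real^2 \<Rightarrow> real^2" where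
  "conn_apply G u v = (\<Sum>i\<in>UNIV. \<Sum>j\<in>UNIV. (u $ i * v $ j) *\<^sub>R G i j)"

text \<open>Curvature R(d_i,d_j)d_k for constant Christoffel symbols (the bracket term vanishes).\<close>
definition curv :: "(2 \<Rightarrow> 2 \<Rightarrow> real^2) \<Rightarrow> 2 \<Rightarrow> 2 \<Rightarrow> 2 \<Rightarrow> real^2" where
  "curv G i j k = (\<Sum>l\<in>UNIV. (G j k $ l) *\<^sub>R G i l - (G i k $ l) *\<^sub>R G j l)"

definition ricci :: "(2 \<Rightarrow> 2 \<Rightarrow> real^2) \<Rightarrow> 2 \<Rightarrow> 2 \<Rightarrow> real" where
  "ricci G j k = (\<Sum>i\<in>UNIV. curv G i j k $ i)"

definition ricci_nondegenerate :: "(2 \<Rightarrow> 2 \<Rightarrow> real^2) \<Rightarrow> bool" where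
  "ricci_nondegenerate G \<longleftrightarrow> det (\<chi> j k. ricci G j k) \<noteq> 0"

fun iter_deriv :: "(real^2) list \<Rightarrow> (real^2 \<Rightarrow> real^2) \<Rightarrow> real^2 \<Rightarrow> real^2" where
  "iter_deriv [] g = g"
| "iter_deriv (v # vs) g = (\<lambda>x. frechet_derivative (iter_deriv vs g) (at x) v)"

definition smooth_on :: "(real^2) set \<Rightarrow> (real^2 \<Rightarrow> real^2) \<Rightarrow> bool" where
  "smooth_on U g \<longleftrightarrow> (\<forall>vs. iter_deriv vs g differentiable_on U)"

definition diffeo :: "(real^2) set \<Rightarrow> (real^2) set \<Rightarrow> (real^2 \<Rightarrow> real^2) \<Rightarrow> bool" where
  "diffeo U V T \<longleftrightarrow> open U \<and> open V \<and> bij_betw T U V \<and> smooth_on U T \<and> smooth_on V (inv_into U T)"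

text \<open>T^* nabla~ = nabla on U:  dT(nabla_X Y) = nabla~_{dT X} (dT Y) for all constant X = u, Y = v.\<close>
definition pullback_eq_on :: "(real^2) set \<Rightarrow> (real^2 \<Rightarrow> real^2) \<Rightarrow> (2 \<Rightarrow> 2 \<Rightarrow> real^2) \<Rightarrow> (2 \<Rightarrow> 2 \<Rightarrow> real^2) \<Rightarrow> bool" where
  "pullback_eq_on U T Gt G \<longleftrightarrow>
     (\<forall>x\<in>U. \<forall>u v.
        frechet_derivative T (at x) (conn_apply G u v)
        = frechet_derivative (\<lambda>y. frechet_derivative T (at y) v) (at x) u
          + conn_apply Gt (frechet_derivative T (at x) u) (frechet_derivative T (at x) v))"

definition linearly_equivalent :: "(2 \<Rightarrow> 2 \<Rightarrow> real^2) \<Rightarrow> (2 \<Rightarrow> 2 \<Rightarrow> real^2) \<Rightarrow> bool" where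
  "linearly_equivalent G Gt \<longleftrightarrow>
     (\<exists>A :: real^2^2. invertible A \<and> pullback_eq_on UNIV (\<lambda>x. A *v x) Gt G)"

definition affinely_equivalent :: "(2 \<Rightarrow> 2 \<Rightarrow> real^2) \<Rightarrow> (2 \<Rightarrow> 2 \<Rightarrow> real^2) \<Rightarrow> bool" where
  "affinely_equivalent G Gt \<longleftrightarrow>
     (\<exists>U V T. U \<noteq> {} \<and> diffeo U V T \<and> pullback_eq_on U T Gt G)"

end

theory Submission
  imports Defs
begin

text \<open>An invertible linear map is a global diffeomorphism with vanishing second derivative, so
  linear equivalence implies affine equivalence. Conversely, let \<open>T\<close> be a local diffeomorphism
  with \<open>T\<^sup>*\<nabla>' = \<nabla>\<close> and \<open>L = dT\<close>. The pullback equation says that the derivative of \<open>L v\<close> in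
  direction \<open>u\<close> is \<open>\<Phi>(u,v) = L(\<nabla>\<^sub>u v) - \<nabla>'\<^bsub>L u\<^esub>(L v)\<close>. Differentiating once more and using the
  symmetry of second derivatives, \<open>L\<close> intertwines the curvature operators; in dimension two
  \<open>R(w,u)v = \<rho>(u,v) w - \<rho>(w,v) u\<close>, so \<open>\<rho>'(L u, L v) = \<rho>(u,v)\<close> identically. Differentiating this
  constant shows that \<open>\<rho>'(\<Phi>(w,u), L v)\<close> is symmetric in \<open>w, u\<close> and skew in \<open>u, v\<close>, hence zero;
  as \<open>\<rho>'\<close> is nondegenerate, \<open>\<Phi>\<close> vanishes, and the linear map \<open>dT(x)\<close> at any point \<open>x\<close> is a
  linear equivalence.\<close>

definition second_difference :: "('a::real_vector \<Rightarrow> 'b::real_vector) \<Rightarrow> 'a \<Rightarrow> 'a \<Rightarrow> 'a \<Rightarrow> 'b" where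
  "second_difference f x u w = f (x + u + w) - f (x + u) - f (x + w) + f x"

lemma second_difference_commute: "second_difference f x u w = second_difference f x w u"
  unfolding second_difference_def by (simp add: ac_simps)

lemma second_difference_bound:
  fixes f :: "'a::real_normed_vector \<Rightarrow> 'b::real_normed_vector"
  assumes deriv: "\<And>y. y \<in> cball x r \<Longrightarrow> (f has_derivative f' y) (at y)"
    and D: "linear D"
    and near: "\<And>y. y \<in> cball x r \<Longrightarrow> norm (f' y w - f' x w - D (y - x)) \<le> e * norm (y - x)"
    and e: "0 \<le> e" and t: "0 \<le> t" "t * (2 * norm w + norm u) \<le> r"
  shows "norm (second_difference f x (t *\<^sub>R w) (t *\<^sub>R u) - t\<^sup>2 *\<^sub>R D u)
    \<le> e * (2 * norm w + norm u) * t\<^sup>2"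
proof -
  \<comment> \<open>Mean value inequality for \<open>\<psi>\<close> on \<open>[0,t]\<close>: its derivative compares \<open>f' _ w\<close> at two points
    that differ by \<open>t u\<close>, which the first-order expansion of \<open>f' _ w\<close> at \<open>x\<close> controls.\<close>
  define M where "M = 2 * norm w + norm u"
  define \<psi> where "\<psi> s = f (x + s *\<^sub>R w + t *\<^sub>R u) - f (x + s *\<^sub>R w) - (s * t) *\<^sub>R D u" for s
  define \<psi>' where "\<psi>' s h = h *\<^sub>R (f' (x + s *\<^sub>R w + t *\<^sub>R u) w - f' (x + s *\<^sub>R w) w - t *\<^sub>R D u)" for s h
  have norms: "norm (s *\<^sub>R w + t *\<^sub>R u) + norm (s *\<^sub>R w) \<le> t * M" if "s \<in> {0..t}" for s
  proof -
    have "norm (s *\<^sub>R w + t *\<^sub>R u) \<le> s * norm w + t * norm u"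
      using norm_triangle_ineq[of "s *\<^sub>R w" "t *\<^sub>R u"] that t by simp
    moreover have "s * norm w \<le> t * norm w" using that by (simp add: mult_right_mono)
    ultimately show ?thesis using that by (simp add: M_def algebra_simps)
  qed
  have in_ball: "x + s *\<^sub>R w + t *\<^sub>R u \<in> cball x r" "x + s *\<^sub>R w \<in> cball x r" if "s \<in> {0..t}" for s
  proof -
    have "norm (s *\<^sub>R w + t *\<^sub>R u) \<le> r" "norm (s *\<^sub>R w) \<le> r"
      using norms[OF that] t norm_ge_zero[of "s *\<^sub>R w"] norm_ge_zero[of "s *\<^sub>R w + t *\<^sub>R u"]
      unfolding M_def by linarith+
    then show "x + s *\<^sub>R w + t *\<^sub>R u \<in> cball x r" "x + s *\<^sub>R w \<in> cball x r"
      by (simp_all add: dist_norm add.assoc norm_minus_commute add.commute)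
  qed
  have "(\<psi> has_derivative \<psi>' s) (at s within {0..t})" if "s \<in> {0..t}" for s
  proof -
    have "((\<lambda>s. f (x + s *\<^sub>R w + t *\<^sub>R u)) has_derivative (\<lambda>h. f' (x + s *\<^sub>R w + t *\<^sub>R u) (h *\<^sub>R w)))
        (at s within {0..t})"
      by (rule has_derivative_compose[where f="\<lambda>s. x + s *\<^sub>R w + t *\<^sub>R u", OF _ deriv[OF in_ball(1)[OF that]]])
        (auto intro!: derivative_eq_intros)
    moreover have "((\<lambda>s. f (x + s *\<^sub>R w)) has_derivative (\<lambda>h. f' (x + s *\<^sub>R w) (h *\<^sub>R w))) (at s within {0..t})"
      by (rule has_derivative_compose[where f="\<lambda>s. x + s *\<^sub>R w", OF _ deriv[OF in_ball(2)[OF that]]])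
        (auto intro!: derivative_eq_intros)
    ultimately show ?thesis
      unfolding \<psi>_def \<psi>'_def
      using linear_scale[OF has_derivative_linear[OF deriv[OF in_ball(1)[OF that]]]]
        linear_scale[OF has_derivative_linear[OF deriv[OF in_ball(2)[OF that]]]]
      by (auto intro!: derivative_eq_intros simp: algebra_simps)
  qed
  moreover have "onorm (\<psi>' s) \<le> e * (t * M)" if "s \<in> {0..t}" for s
  proof (rule onorm_le)
    fix h :: real
    have "f' (x + s *\<^sub>R w + t *\<^sub>R u) w - f' (x + s *\<^sub>R w) w - t *\<^sub>R D u
        = (f' (x + s *\<^sub>R w + t *\<^sub>R u) w - f' x w - D (s *\<^sub>R w + t *\<^sub>R u))
          - (f' (x + s *\<^sub>R w) w - f' x w - D (s *\<^sub>R w))"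
      using linear_add[OF D] linear_scale[OF D] by (simp add: algebra_simps)
    also have "norm \<dots> \<le> e * norm (s *\<^sub>R w + t *\<^sub>R u) + e * norm (s *\<^sub>R w)"
      using norm_triangle_ineq4 near[OF in_ball(1)[OF that]] near[OF in_ball(2)[OF that]]
      by (smt (verit) add_diff_cancel_left' add.assoc)
    also have "\<dots> \<le> e * (t * M)" using mult_left_mono[OF norms[OF that] e] by (simp add: distrib_left)
    finally show "norm (\<psi>' s h) \<le> e * (t * M) * norm h"
      unfolding \<psi>'_def by (simp add: mult_left_mono mult.commute)
  qed
  ultimately have "norm (\<psi> t - \<psi> 0) \<le> e * (t * M) * norm (t - 0)"
    using t by (intro differentiable_bound[of "{0..t}" \<psi> \<psi>']) auto
  moreover have "\<psi> t - \<psi> 0 = second_difference f x (t *\<^sub>R w) (t *\<^sub>R u) - t\<^sup>2 *\<^sub>R D u"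
    unfolding \<psi>_def second_difference_def by (simp add: power2_eq_square algebra_simps)
  ultimately show ?thesis using t by (simp add: M_def power2_eq_square mult_ac)
qed

lemma second_difference_tendsto:
  fixes f :: "'a::real_normed_vector \<Rightarrow> 'b::real_normed_vector"
  assumes U: "open U" "x \<in> U"
    and deriv: "\<And>y. y \<in> U \<Longrightarrow> (f has_derivative f' y) (at y)"
    and second: "((\<lambda>y. f' y w) has_derivative D) (at x)"
  shows "((\<lambda>t. second_difference f x (t *\<^sub>R w) (t *\<^sub>R u) /\<^sub>R t\<^sup>2) \<longlongrightarrow> D u) (at_right 0)"
proof (rule tendstoI)
  fix \<epsilon> :: real
  assume "\<epsilon> > 0"
  define M where "M = 2 * norm w + norm u"
  define e where "e = \<epsilon> / (2 * (M + 1))"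
  have M: "M \<ge> 0" unfolding M_def by simp
  have e: "e > 0" unfolding e_def using \<open>\<epsilon> > 0\<close> M by simp
  obtain \<delta> where "\<delta> > 0"
    and near: "\<And>y. norm (y - x) < \<delta> \<Longrightarrow> norm (f' y w - f' x w - D (y - x)) \<le> e * norm (y - x)"
    using second e unfolding has_derivative_at_alt by blast
  obtain r where "r > 0" and r: "cball x r \<subseteq> U"
    using U open_contains_cball by blast
  define \<rho> where "\<rho> = min (\<delta> / 2) r"
  have "\<rho> > 0" unfolding \<rho>_def using \<open>\<delta> > 0\<close> \<open>r > 0\<close> by simp
  show "\<forall>\<^sub>F t in at_right 0. dist (second_difference f x (t *\<^sub>R w) (t *\<^sub>R u) /\<^sub>R t\<^sup>2) (D u) < \<epsilon>"
    unfolding eventually_at_right_field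
  proof (intro exI[of _ "\<rho> / (M + 1)"] conjI allI impI)
    show "0 < \<rho> / (M + 1)" using \<open>\<rho> > 0\<close> M by simp
    fix t :: real
    assume "0 < t" "t < \<rho> / (M + 1)"
    then have "t * M \<le> \<rho>"
      using M by (simp add: less_divide_eq algebra_simps)
    have "norm (second_difference f x (t *\<^sub>R w) (t *\<^sub>R u) - t\<^sup>2 *\<^sub>R D u) \<le> e * M * t\<^sup>2"
      unfolding M_def
    proof (rule second_difference_bound[where r = \<rho>])
      show "(f has_derivative f' y) (at y)" if "y \<in> cball x \<rho>" for y
        using deriv r that by (auto simp: \<rho>_def)
      show "norm (f' y w - f' x w - D (y - x)) \<le> e * norm (y - x)" if "y \<in> cball x \<rho>" for y
      proof (rule near)
        show "norm (y - x) < \<delta>"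
          using that \<open>\<delta> > 0\<close> by (simp add: \<rho>_def dist_norm norm_minus_commute)
      qed
    qed (use second has_derivative_linear e \<open>0 < t\<close> \<open>t * M \<le> \<rho>\<close> in \<open>auto simp: M_def\<close>)
    moreover have "second_difference f x (t *\<^sub>R w) (t *\<^sub>R u) /\<^sub>R t\<^sup>2 - D u
        = (1 / t\<^sup>2) *\<^sub>R (second_difference f x (t *\<^sub>R w) (t *\<^sub>R u) - t\<^sup>2 *\<^sub>R D u)"
      using \<open>0 < t\<close> by (simp add: scaleR_diff_right inverse_eq_divide)
    ultimately have "dist (second_difference f x (t *\<^sub>R w) (t *\<^sub>R u) /\<^sub>R t\<^sup>2) (D u) \<le> e * M"
      using \<open>0 < t\<close> by (simp add: dist_norm divide_le_eq)
    also have "\<dots> \<le> e * (M + 1)"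
      using e by simp
    also have "\<dots> = \<epsilon> / 2"
      using M unfolding e_def by (simp add: divide_simps)
    also have "\<dots> < \<epsilon>"
      using \<open>\<epsilon> > 0\<close> by simp
    finally show "dist (second_difference f x (t *\<^sub>R w) (t *\<^sub>R u) /\<^sub>R t\<^sup>2) (D u) < \<epsilon>" .
  qed
qed

lemma second_derivative_symmetric:
  fixes f :: "'a::real_normed_vector \<Rightarrow> 'b::real_normed_vector"
  assumes "open U" "x \<in> U"
    and "\<And>y. y \<in> U \<Longrightarrow> (f has_derivative f' y) (at y)"
    and "\<And>v. ((\<lambda>y. f' y v) has_derivative (\<lambda>z. F z v)) (at x)"
  shows "F u w = F w u"
proof -
  have "((\<lambda>t. second_difference f x (t *\<^sub>R w) (t *\<^sub>R u) /\<^sub>R t\<^sup>2) \<longlongrightarrow> F u w) (at_right 0)"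
    "((\<lambda>t. second_difference f x (t *\<^sub>R u) (t *\<^sub>R w) /\<^sub>R t\<^sup>2) \<longlongrightarrow> F w u) (at_right 0)"
    using assms by (auto intro!: second_difference_tendsto)
  then show ?thesis
    by (simp add: second_difference_commute[of f x "_ *\<^sub>R u"] tendsto_unique[OF trivial_limit_at_right_real])
qed

definition torsion_free :: "(2 \<Rightarrow> 2 \<Rightarrow> real^2) \<Rightarrow> bool" where
  "torsion_free G \<longleftrightarrow> (\<forall>i j. G i j = G j i)"

lemma torsion_free_typeA: "torsion_free (typeA a b c d e f)"
  unfolding torsion_free_def typeA_def by (auto simp: forall_2)

lemma conn_apply_commute:
  assumes "torsion_free G"
  shows "conn_apply G u v = conn_apply G v u"
  using assms unfolding torsion_free_def conn_apply_def
  by (simp add: sum_2 algebra_simps)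

lemma bounded_bilinear_conn_apply: "bounded_bilinear (conn_apply G)"
  unfolding bilinear_conv_bounded_bilinear[symmetric] bilinear_def linear_iff conn_apply_def
  by (simp add: sum_2 algebra_simps)

definition ricci_form :: "(2 \<Rightarrow> 2 \<Rightarrow> real^2) \<Rightarrow> real^2 \<Rightarrow> real^2 \<Rightarrow> real" where
  "ricci_form G u v = (\<Sum>j\<in>UNIV. \<Sum>k\<in>UNIV. u $ j * v $ k * ricci G j k)"

lemma bounded_bilinear_ricci_form: "bounded_bilinear (ricci_form G)"
  unfolding bilinear_conv_bounded_bilinear[symmetric] bilinear_def linear_iff ricci_form_def
  by (simp add: sum_2 algebra_simps)

lemma ricci_form_commute:
  assumes "torsion_free G"
  shows "ricci_form G u v = ricci_form G v u"
  using assms unfolding torsion_free_def ricci_form_def ricci_def curv_def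
  by (simp add: sum_2 algebra_simps)

definition curv_apply :: "(2 \<Rightarrow> 2 \<Rightarrow> real^2) \<Rightarrow> real^2 \<Rightarrow> real^2 \<Rightarrow> real^2 \<Rightarrow> real^2" where
  "curv_apply G w u v = conn_apply G w (conn_apply G u v) - conn_apply G u (conn_apply G w v)"

lemma curv_apply_dim2:
  "curv_apply G w u v = ricci_form G u v *\<^sub>R w - ricci_form G w v *\<^sub>R u"
  unfolding curv_apply_def ricci_form_def ricci_def curv_def conn_apply_def
  by (simp add: sum_2 vec_eq_iff forall_2 algebra_simps)

lemma ricci_form_nondegenerate:
  assumes "ricci_nondegenerate G" and "\<And>p. ricci_form G z p = 0"
  shows "z = 0"
proof -
  have det: "ricci G 1 1 * ricci G 2 2 - ricci G 1 2 * ricci G 2 1 \<noteq> 0"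
    using assms(1) unfolding ricci_nondegenerate_def by (simp add: det_2)
  have "z $ 1 * ricci G 1 1 + z $ 2 * ricci G 2 1 = 0" "z $ 1 * ricci G 1 2 + z $ 2 * ricci G 2 2 = 0"
    using assms(2)[of "axis 1 1"] assms(2)[of "axis 2 1"] unfolding ricci_form_def
    by (simp_all add: sum_2 axis_def)
  then have "z $ 1 * (ricci G 1 1 * ricci G 2 2 - ricci G 1 2 * ricci G 2 1) = 0"
    "z $ 2 * (ricci G 1 1 * ricci G 2 2 - ricci G 1 2 * ricci G 2 1) = 0"
    by algebra+
  then show ?thesis
    using det by (simp add: vec_eq_iff forall_2)
qed

lemma frechet_derivative_matrix_vector_mult:
  fixes A :: "real^'n^'m"
  shows "frechet_derivative (\<lambda>x. A *v x) (at y) = (\<lambda>x. A *v x)"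
  by (rule frechet_derivative_at[OF bounded_linear_imp_has_derivative, symmetric])
    (rule matrix_vector_mul_bounded_linear)

lemma iter_deriv_matrix_vector_mult:
  fixes A :: "real^2^2"
  shows "iter_deriv vs (\<lambda>x. A *v x) = (\<lambda>x. A *v x) \<or> (\<exists>c. iter_deriv vs (\<lambda>x. A *v x) = (\<lambda>x. c))"
  by (induction vs) (auto simp: frechet_derivative_matrix_vector_mult)

lemma smooth_on_matrix_vector_mult:
  fixes A :: "real^2^2"
  shows "smooth_on S (\<lambda>x. A *v x)"
  unfolding smooth_on_def
  using iter_deriv_matrix_vector_mult[of _ A]
    bounded_linear_imp_differentiable_on[OF matrix_vector_mul_bounded_linear]
  by (metis differentiable_on_const)

lemma diffeo_matrix_vector_mult:
  fixes A :: "real^2^2"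
  assumes "invertible A"
  shows "diffeo UNIV UNIV (\<lambda>x. A *v x)"
proof -
  obtain B where BA: "B ** A = mat 1" and AB: "A ** B = mat 1"
    using assms unfolding invertible_def by blast
  have "bij (\<lambda>x. A *v x)"
    by (rule o_bij[where g = "\<lambda>x. B *v x"]) (auto simp: matrix_vector_mul_assoc AB BA)
  moreover have "inv (\<lambda>x. A *v x) = (\<lambda>x. B *v x)"
    by (rule inv_unique_comp) (auto simp: matrix_vector_mul_assoc AB BA)
  ultimately show ?thesis
    unfolding diffeo_def by (simp add: smooth_on_matrix_vector_mult)
qed

lemma linearly_equivalent_imp_affinely_equivalent:
  assumes "linearly_equivalent G Gt"
  shows "affinely_equivalent G Gt"
  using assms diffeo_matrix_vector_mult
  unfolding linearly_equivalent_def affinely_equivalent_def by blast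

lemma smooth_on_imp_has_derivative:
  assumes "open U" "smooth_on U T" "y \<in> U"
  shows "(T has_derivative frechet_derivative T (at y)) (at y)"
proof -
  have "T differentiable_on U"
    using assms(2) unfolding smooth_on_def by (metis iter_deriv.simps(1))
  then show ?thesis
    using assms(1,3) by (simp add: differentiable_on_eq_differentiable_at frechet_derivative_works)
qed

lemma smooth_on_imp_linear_frechet_derivative:
  assumes "open U" "smooth_on U T" "y \<in> U"
  shows "linear (frechet_derivative T (at y))"
  using smooth_on_imp_has_derivative[OF assms] has_derivative_linear by blast

lemma smooth_on_imp_differentiable_frechet_derivative:
  assumes "open U" "smooth_on U T" "y \<in> U"
  shows "(\<lambda>z. frechet_derivative T (at z) v) differentiable (at y)"
proof -
  have "iter_deriv [v] T differentiable_on U"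
    using assms(2) unfolding smooth_on_def by blast
  then show ?thesis
    using assms(1,3) by (simp add: differentiable_on_eq_differentiable_at)
qed

lemma diffeo_imp_inj_frechet_derivative:
  assumes diffeo: "diffeo U V T" and y: "y \<in> U"
  shows "inj (frechet_derivative T (at y))"
proof -
  have U: "open U" and V: "open V" and bij: "bij_betw T U V"
    and T: "smooth_on U T" and S: "smooth_on V (inv_into U T)"
    using diffeo unfolding diffeo_def by auto
  have "T y \<in> V"
    using bij y bij_betwE by blast
  then obtain DS where DS: "(inv_into U T has_derivative DS) (at (T y))"
    using smooth_on_imp_has_derivative[OF V S] by blast
  have "((\<lambda>z. inv_into U T (T z)) has_derivative (\<lambda>h. DS (frechet_derivative T (at y) h))) (at y)"
    using has_derivative_compose[OF smooth_on_imp_has_derivative[OF U T y] DS] .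
  then have "((\<lambda>z. z) has_derivative (\<lambda>h. DS (frechet_derivative T (at y) h))) (at y)"
    by (rule has_derivative_transform_within_open[OF _ U y]) (simp add: bij_betw_inv_into_left[OF bij])
  then have "(\<lambda>h. DS (frechet_derivative T (at y) h)) = (\<lambda>h. h)"
    using has_derivative_unique has_derivative_ident by blast
  then show ?thesis
    by (metis injI)
qed

lemma sym_antisym_form_eq_0:
  fixes C :: "'a \<Rightarrow> 'a \<Rightarrow> 'a \<Rightarrow> real"
  assumes sym: "\<And>w u v. C w u v = C u w v" and antisym: "\<And>w u v. C w u v = - C w v u"
  shows "C w u v = 0"
proof -
  have "C w u v = - C v w u" by (simp add: antisym[of w u v] sym[of w v u])
  also have "\<dots> = C u v w" by (simp add: antisym[of v w u] sym[of v u w])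
  also have "\<dots> = - C w u v" by (simp add: antisym[of u v w] sym[of u w v])
  finally show ?thesis by simp
qed

text \<open>When \<open>T\<^sup>*\<nabla>' = \<nabla>\<close>, the defect at \<open>y\<close> is the second derivative of \<open>T\<close> at \<open>y\<close>.\<close>

definition affine_defect ::
    "(real^2 \<Rightarrow> real^2) \<Rightarrow> (2 \<Rightarrow> 2 \<Rightarrow> real^2) \<Rightarrow> (2 \<Rightarrow> 2 \<Rightarrow> real^2) \<Rightarrow> real^2 \<Rightarrow> real^2 \<Rightarrow> real^2 \<Rightarrow> real^2" where
  "affine_defect T Gt G y u v =
     frechet_derivative T (at y) (conn_apply G u v)
     - conn_apply Gt (frechet_derivative T (at y) u) (frechet_derivative T (at y) v)"

context
  fixes U :: "(real^2) set" and T :: "real^2 \<Rightarrow> real^2" and G Gt :: "2 \<Rightarrow> 2 \<Rightarrow> real^2"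
  assumes open_U: "open U" and smooth_T: "smooth_on U T" and pullback: "pullback_eq_on U T Gt G"
begin

lemma has_derivative_frechet_derivative_pullback:
  assumes "y \<in> U"
  shows "((\<lambda>z. frechet_derivative T (at z) v) has_derivative (\<lambda>u. affine_defect T Gt G y u v)) (at y)"
proof -
  have "((\<lambda>z. frechet_derivative T (at z) v) has_derivative
      frechet_derivative (\<lambda>z. frechet_derivative T (at z) v) (at y)) (at y)"
    using smooth_on_imp_differentiable_frechet_derivative[OF open_U smooth_T assms] frechet_derivative_works
    by blast
  moreover have "frechet_derivative (\<lambda>z. frechet_derivative T (at z) v) (at y)
      = (\<lambda>u. affine_defect T Gt G y u v)"
    using pullback assms unfolding pullback_eq_on_def affine_defect_def
    by (intro ext) (metis add_diff_cancel_right')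
  ultimately show ?thesis
    by simp
qed

lemma has_derivative_affine_defect:
  assumes "y \<in> U"
  shows "((\<lambda>z. affine_defect T Gt G z u v) has_derivative
      (\<lambda>w. affine_defect T Gt G y w (conn_apply G u v)
           - conn_apply Gt (affine_defect T Gt G y w u) (frechet_derivative T (at y) v)
           - conn_apply Gt (frechet_derivative T (at y) u) (affine_defect T Gt G y w v))) (at y)"
  unfolding affine_defect_def[of T Gt G _ u v]
  by (rule has_derivative_eq_rhs,
      rule has_derivative_diff[OF has_derivative_frechet_derivative_pullback[OF assms]
        bounded_bilinear.FDERIV[OF bounded_bilinear_conn_apply
          has_derivative_frechet_derivative_pullback[OF assms]
          has_derivative_frechet_derivative_pullback[OF assms]]])
    (simp add: algebra_simps)

lemma curv_apply_pullback:
  assumes "torsion_free G" "torsion_free Gt" "y \<in> U"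
  shows "frechet_derivative T (at y) (curv_apply G w u v)
    = curv_apply Gt (frechet_derivative T (at y) w) (frechet_derivative T (at y) u)
        (frechet_derivative T (at y) v)"
proof -
  define L where "L = frechet_derivative T (at y)"
  define \<Phi> where "\<Phi> = affine_defect T Gt G y"
  have "\<Phi> w (conn_apply G u v) - conn_apply Gt (\<Phi> w u) (L v) - conn_apply Gt (L u) (\<Phi> w v)
      = \<Phi> u (conn_apply G w v) - conn_apply Gt (\<Phi> u w) (L v) - conn_apply Gt (L w) (\<Phi> u v)"
    unfolding L_def \<Phi>_def
    by (rule second_derivative_symmetric[OF open_U \<open>y \<in> U\<close> has_derivative_frechet_derivative_pullback
          has_derivative_affine_defect[OF \<open>y \<in> U\<close>]])
  moreover have "linear L"
    unfolding L_def using \<open>y \<in> U\<close> by (rule smooth_on_imp_linear_frechet_derivative[OF open_U smooth_T])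
  moreover have "\<Phi> w u = \<Phi> u w"
    unfolding \<Phi>_def affine_defect_def
    by (simp add: conn_apply_commute[OF assms(1)] conn_apply_commute[OF assms(2)])
  ultimately show ?thesis
    unfolding curv_apply_def L_def[symmetric] \<Phi>_def affine_defect_def
    by (simp add: linear_diff bounded_bilinear.diff_left[OF bounded_bilinear_conn_apply]
        bounded_bilinear.diff_right[OF bounded_bilinear_conn_apply] conn_apply_commute[OF assms(2)]
        algebra_simps)
qed

lemma ricci_form_pullback:
  assumes "torsion_free G" "torsion_free Gt" "y \<in> U" "inj (frechet_derivative T (at y))"
  shows "ricci_form Gt (frechet_derivative T (at y) u) (frechet_derivative T (at y) v) = ricci_form G u v"
proof -
  define L where "L = frechet_derivative T (at y)"
  define \<alpha> where "\<alpha> p = ricci_form G p v - ricci_form Gt (L p) (L v)" for p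
  have L: "linear L"
    unfolding L_def using \<open>y \<in> U\<close> by (rule smooth_on_imp_linear_frechet_derivative[OF open_U smooth_T])
  have "L (\<alpha> p *\<^sub>R q - \<alpha> q *\<^sub>R p) = 0" for p q
    using curv_apply_pullback[OF assms(1-3), of q p v]
    unfolding curv_apply_dim2 L_def[symmetric] \<alpha>_def
    by (simp add: linear_diff[OF L] linear_add[OF L] linear_scale[OF L] algebra_simps)
  then have \<alpha>: "\<alpha> p *\<^sub>R q = \<alpha> q *\<^sub>R p" for p q
    using assms(4) linear_injective_0[OF L] unfolding L_def by (metis eq_iff_diff_eq_0)
  have "\<alpha> (axis 1 1) = 0" "\<alpha> (axis 2 1) = 0"
    using \<alpha>[of "axis 2 1" "axis 1 1"] by (simp_all add: vec_eq_iff forall_2 axis_def)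
  then have "\<alpha> u = 0"
    using \<alpha>[of u "axis 1 1"] by (simp add: vec_eq_iff forall_2 axis_def)
  then show ?thesis
    unfolding \<alpha>_def L_def by simp
qed

lemma affine_defect_eq_0:
  assumes G: "torsion_free G" and Gt: "torsion_free Gt" and nondeg: "ricci_nondegenerate Gt"
    and inj: "\<And>y. y \<in> U \<Longrightarrow> inj (frechet_derivative T (at y))" and "x \<in> U"
  shows "affine_defect T Gt G x u v = 0"
proof -
  define L where "L = frechet_derivative T (at x)"
  define \<Phi> where "\<Phi> = affine_defect T Gt G x"
  have L: "linear L"
    unfolding L_def using \<open>x \<in> U\<close> by (rule smooth_on_imp_linear_frechet_derivative[OF open_U smooth_T])
  have deriv: "((\<lambda>z. ricci_form Gt (frechet_derivative T (at z) p) (frechet_derivative T (at z) q))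
      has_derivative (\<lambda>w. ricci_form Gt (L p) (\<Phi> w q) + ricci_form Gt (\<Phi> w p) (L q))) (at x)" for p q
    unfolding L_def \<Phi>_def
    using bounded_bilinear.FDERIV[OF bounded_bilinear_ricci_form
        has_derivative_frechet_derivative_pullback[OF \<open>x \<in> U\<close>]
        has_derivative_frechet_derivative_pullback[OF \<open>x \<in> U\<close>]] .
  have const: "((\<lambda>z. ricci_form Gt (frechet_derivative T (at z) p) (frechet_derivative T (at z) q))
      has_derivative (\<lambda>w. 0)) (at x)" for p q
    by (rule has_derivative_transform_within_open[OF has_derivative_const[of "ricci_form G p q"]
          open_U \<open>x \<in> U\<close>])
      (simp add: ricci_form_pullback[OF G Gt _ inj])
  have ricci_constant: "ricci_form Gt (L p) (\<Phi> w q) + ricci_form Gt (\<Phi> w p) (L q) = 0" for w p q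
    using fun_cong[OF has_derivative_unique[OF deriv[of p q] const[of p q]], of w] by simp
  have antisym: "ricci_form Gt (\<Phi> w p) (L q) = - ricci_form Gt (\<Phi> w q) (L p)" for w p q
    using ricci_constant[of p w q] ricci_form_commute[OF Gt, of "L p" "\<Phi> w q"] by linarith
  have sym: "\<Phi> w p = \<Phi> p w" for w p
    unfolding \<Phi>_def affine_defect_def
    by (simp add: conn_apply_commute[OF G] conn_apply_commute[OF Gt])
  have vanish: "ricci_form Gt (\<Phi> u v) (L q) = 0" for q
    by (rule sym_antisym_form_eq_0[of "\<lambda>w p q. ricci_form Gt (\<Phi> w p) (L q)"]) (metis sym, rule antisym)
  have "surj L"
    using L inj[OF \<open>x \<in> U\<close>] linear_injective_imp_surjective unfolding L_def by blast
  then have "ricci_form Gt (\<Phi> u v) p = 0" for p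
    using vanish by (metis surj_def)
  then show ?thesis
    unfolding \<Phi>_def[symmetric] by (rule ricci_form_nondegenerate[OF nondeg])
qed

end

lemma affinely_equivalent_imp_linearly_equivalent:
  assumes G: "torsion_free G" and Gt: "torsion_free Gt" and nondeg: "ricci_nondegenerate Gt"
    and "affinely_equivalent G Gt"
  shows "linearly_equivalent G Gt"
proof -
  obtain U V T x where diffeo: "diffeo U V T" and pullback: "pullback_eq_on U T Gt G" and "x \<in> U"
    using assms(4) unfolding affinely_equivalent_def by blast
  have U: "open U" and T: "smooth_on U T"
    using diffeo unfolding diffeo_def by auto
  define A :: "real^2^2" where "A = matrix (frechet_derivative T (at x))"
  have A: "(\<lambda>h. A *v h) = frechet_derivative T (at x)"
    unfolding A_def using smooth_on_imp_linear_frechet_derivative[OF U T \<open>x \<in> U\<close>] by simp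
  have "invertible A"
    unfolding invertible_left_inverse matrix_left_invertible_injective A
    using diffeo_imp_inj_frechet_derivative[OF diffeo \<open>x \<in> U\<close>] .
  moreover have "pullback_eq_on UNIV (\<lambda>h. A *v h) Gt G"
    using affine_defect_eq_0[OF U T pullback G Gt nondeg diffeo_imp_inj_frechet_derivative[OF diffeo]
        \<open>x \<in> U\<close>]
    unfolding pullback_eq_on_def frechet_derivative_matrix_vector_mult affine_defect_def A[symmetric]
    by simp
  ultimately show ?thesis
    unfolding linearly_equivalent_def by blast
qed

theorem theorem3p8:
  fixes a b c d e f a' b' c' d' e' f' :: real
  assumes "ricci_nondegenerate (typeA a b c d e f)"
      and "ricci_nondegenerate (typeA a' b' c' d' e' f')"
  shows "linearly_equivalent (typeA a b c d e f) (typeA a' b' c' d' e' f')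
     \<longleftrightarrow> affinely_equivalent (typeA a b c d e f) (typeA a' b' c' d' e' f')"
  \<comment> \<open>Only the Ricci tensor of the target connection has to be nondegenerate.\<close>
  using linearly_equivalent_imp_affinely_equivalent
    affinely_equivalent_imp_linearly_equivalent[OF torsion_free_typeA torsion_free_typeA assms(2)]
  by blast

end
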